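(* Fix an iteration index $t$ and an agent $p$. Let $w^{t+1},\lambda^t_p,z^t_p\in\mathbb{R}^{J\times K}$, $\rho^t>0$ and $\eta^t>0$ be given and independent of the data. For a dataset $\mathcal{D}$ and a noise vector $\xi\in\mathbb{R}^{J\times K}$ put $$G^t(z;\mathcal{D},\xi)=\langle f'_p(z^t_p;\mathcal{D}),z\rangle+\tfrac{\rho^t}{2}\big\|w^{t+1}-z+\tfrac{1}{\rho^t}(\lambda^t_p-\xi)\big\|^2,$$ and let $$z^{t+1}_p(\mathcal{D})=\operatorname{argmin}_{z\in\mathcal{W}}\ G^t(z;\mathcal{D},\tilde\xi^t_p)+\tfrac{1}{2\eta^t}\|z-z^t_p\|^2,$$ where $\tilde\xi^t_p$ is a random vector in $\mathbb{R}^{J\times K}$ whose entries are i.i.d. Laplace with mean $0$ and scale $\bar\Delta^t_p/\bar\epsilon$, i.e. with joint density proportional to $\exp(-\bar\epsilon\|\tilde\xi^t_p\|_1/\bar\Delta^t_p)$, where $\bar\epsilon>0$ and $$\bar\Delta^t_p=\max_{\mathcal{D}'_p\in\widehat{\mathcal{D}}_p}\|f'_p(z^t_p;\mathcal{D}_p)-f'_p(z^t_p;\mathcal{D}'_p)\|_1 ,$$ the same noise distribution being used whether the input is $\mathcal{D}_p$ or a neighbouring dataset. Then for all measurable $\mathcal{S}\subset\mathbb{R}^{J\times K}$ and all $\mathcal{D}'_p\in\widehat{\mathcal{D}}_p$, $$e^{-\bar\epsilon}\,\mathbb{P}(z^{t+1}_p(\mathcal{D}'_p)\in\mathcal{S})\le\mathbb{P}(z^{t+1}_p(\mathcal{D}_p)\in\mathcal{S})\le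 e^{\bar\epsilon}\,\mathbb{P}(z^{t+1}_p(\mathcal{D}'_p)\in\mathcal{S}).$$
   Context: Setting: $P,J,K$ positive integers; matrices in $\mathbb{R}^{J\times K}$ carry the Frobenius inner product $\langle\cdot,\cdot\rangle$ and norm $\|\cdot\|$, and $\|\cdot\|_1$ is the entrywise $\ell_1$-norm. Agent $p\in[P]$ holds a dataset $\mathcal{D}_p=\{(x_{pi},y_{pi})\}_{i=1}^{I_p}$ with $x_{pi}\in\mathbb{R}^J$, $y_{pi}\in\mathbb{R}^K$; $I=\sum_{p}I_p$. Let $\varphi(\cdot;x,y)$ be a convex loss on $\mathbb{R}^{J\times K}$, $r$ a convex regularizer on $\mathbb{R}^{J\times K}$, $\beta>0$, and $f_p(z;\mathcal{D}_p)=\frac1I\sum_{i=1}^{I_p}\varphi(z;x_{pi},y_{pi})+\frac{\beta}{P}r(z)$; $f'_p(z;\mathcal{D})$ denotes a (fixed) subgradient of $f_p(\cdot;\mathcal{D})$ at $z$. $\mathcal{W}\subset\mathbb{R}^{J\times K}$ is a compact convex set written as $\mathcal{W}=\{z:h_m(z)\le0,\ m\in[M]\}$ with each $h_m$ convex and twice continuously differentiable. $\widehat{\mathcal{D}}_p$ is the collection of datasets differing from $\mathcal{D}_p$ in a single entry. The objective above is strongly convex in $z$, so the minimizer is unique. *)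

theory Defs
  imports "HOL-Probability.Probability"
begin

text \<open>Matrices in R^(J x K) are modelled as real^'k^'j (finite index types 'j, 'k);
  the Euclidean inner product / norm on this type is the Frobenius inner product / norm.\<close>

definition l1norm :: "real^'k^'j \<Rightarrow> real" where
  "l1norm A = (\<Sum>i\<in>UNIV. \<Sum>j\<in>UNIV. \<bar>A $ i $ j\<bar>)"

definition fp :: "nat \<Rightarrow> nat \<Rightarrow> real \<Rightarrow> (real^'k^'j \<Rightarrow> real^'j \<Rightarrow> real^'k \<Rightarrow> real)
    \<Rightarrow> (real^'k^'j \<Rightarrow> real) \<Rightarrow> ((real^'j) \<times> (real^'k)) list \<Rightarrow> real^'k^'j \<Rightarrow> real" where
  "fp P I \<beta> \<phi> r D z =
     (1 / real I) * (\<Sum>i<length D. \<phi> z (fst (D ! i)) (snd (D ! i))) + \<beta> / real P * r z"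

definition is_subgradient :: "('a::real_inner \<Rightarrow> real) \<Rightarrow> 'a \<Rightarrow> 'a \<Rightarrow> bool" where
  "is_subgradient f z g \<longleftrightarrow> (\<forall>y. f z + inner g (y - z) \<le> f y)"

definition neighbours :: "'a list \<Rightarrow> 'a list set" where
  "neighbours D = {D'. length D' = length D \<and>
     (\<exists>i<length D. D' ! i \<noteq> D ! i \<and> (\<forall>k<length D. k \<noteq> i \<longrightarrow> D' ! k = D ! k))}"

definition sensitivity :: "('a list \<Rightarrow> real^'k^'j) \<Rightarrow> 'a list \<Rightarrow> real" where
  "sensitivity g D = Sup ((\<lambda>D'. l1norm (g D - g D')) ` neighbours D)"

definition C2_fun :: "('a::real_normed_vector \<Rightarrow> real) \<Rightarrow> bool" where
  "C2_fun h \<longleftrightarrow> (\<exists>Dh :: 'a \<Rightarrow> ('a \<Rightarrow>\<^sub>L real). \<exists>D2h :: 'a \<Rightarrow> ('a \<Rightarrow>\<^sub>L ('a \<Rightarrow>\<^sub>L real)).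
      (\<forall>z. (h has_derivative blinfun_apply (Dh z)) (at z)) \<and>
      (\<forall>z. (Dh has_derivative blinfun_apply (D2h z)) (at z)) \<and>
      continuous_on UNIV D2h)"

text \<open>Entrywise i.i.d. Laplace(0, Delta/eps) noise on real^'k^'j; for Delta = 0 the
  degenerate (point mass at 0) distribution.\<close>
definition laplace_noise :: "real \<Rightarrow> real \<Rightarrow> (real^'k^'j) measure" where
  "laplace_noise \<epsilon> \<Delta> =
     (if \<Delta> > 0 then
        density lborel (\<lambda>\<xi>. ennreal ((\<epsilon> / (2 * \<Delta>)) ^ (CARD('j) * CARD('k))
                                      * exp (- \<epsilon> * l1norm \<xi> / \<Delta>)))
      else return borel 0)"

text \<open>G^t(z; D, xi) with g = f'_p(z^t_p; D).\<close>
definition G_obj :: "real^'k^'j \<Rightarrow> real^'k^'j \<Rightarrow> real^'k^'j \<Rightarrow> real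
    \<Rightarrow> real^'k^'j \<Rightarrow> real^'k^'j \<Rightarrow> real" where
  "G_obj g w lam \<rho> z \<xi> = inner g z + \<rho> / 2 * (norm (w - z + (1 / \<rho>) *\<^sub>R (lam - \<xi>)))\<^sup>2"

definition z_update :: "(real^'k^'j) set \<Rightarrow> real^'k^'j \<Rightarrow> real^'k^'j \<Rightarrow> real^'k^'j
    \<Rightarrow> real^'k^'j \<Rightarrow> real \<Rightarrow> real \<Rightarrow> real^'k^'j \<Rightarrow> real^'k^'j" where
  "z_update W g w lam zt \<rho> \<eta> \<xi> =
     (THE z. z \<in> W \<and> (\<forall>y\<in>W.
        G_obj g w lam \<rho> z \<xi> + 1 / (2 * \<eta>) * (norm (z - zt))\<^sup>2
          \<le> G_obj g w lam \<rho> y \<xi> + 1 / (2 * \<eta>) * (norm (y - zt))\<^sup>2))"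

end

theory Submission imports Defs begin

text \<open>The gradient g and the noise \<xi> enter G_obj only through g + \<xi>, up to a term that does
  not depend on z. Hence the update for D equals the update for a neighbour D' at the noise
  translated by d = f'(D) - f'(D'), and the two output probabilities are the Laplace measures
  of a set and of its translate by d. Since the l1-norm of d is at most the sensitivity \<Delta>, the
  Laplace density changes by a factor of at most e^\<epsilon> under this translation. No property of
  the minimiser (existence, uniqueness) and no measurability of S is needed: of the hypotheses
  only \<rho> > 0, \<epsilon> > 0 and the boundedness of the sensitivity set are used.\<close>

lemma borel_measurable_l1norm: "l1norm \<in> borel_measurable (borel :: (real^'k^'j) measure)"
  unfolding l1norm_def[abs_def] by (intro borel_measurable_continuous_onI continuous_intros)

lemma l1norm_triangle: "l1norm (a + b :: real^'k^'j) \<le> l1norm a + l1norm b"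
  unfolding l1norm_def by (simp add: sum.distrib[symmetric] abs_triangle_ineq sum_mono)

lemma l1norm_uminus [simp]: "l1norm (- a :: real^'k^'j) = l1norm a"
  unfolding l1norm_def by simp

lemma l1norm_le_0_imp_eq_0:
  assumes "l1norm (a :: real^'k^'j) \<le> 0"
  shows "a = 0"
proof -
  have "\<forall>i\<in>UNIV. (\<Sum>j\<in>UNIV. \<bar>a $ i $ j\<bar>) = 0"
    using assms unfolding l1norm_def
    by (subst sum_nonneg_eq_0_iff[symmetric]) (auto intro: sum_nonneg antisym)
  then show "a = 0" by (simp add: sum_nonneg_eq_0_iff vec_eq_iff)
qed

lemma G_obj_decompose:
  assumes "\<rho> \<noteq> 0"
  shows "G_obj g w lam \<rho> z \<xi> = inner (g + \<xi>) z + \<rho> / 2 * (norm (w + (1/\<rho>) *\<^sub>R lam - z))\<^sup>2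
     + ((norm \<xi>)\<^sup>2 / (2 * \<rho>) - inner (w + (1/\<rho>) *\<^sub>R lam) \<xi>)"
proof -
  define u where "u = w + (1/\<rho>) *\<^sub>R lam"
  have u: "w - z + (1 / \<rho>) *\<^sub>R (lam - \<xi>) = (u - z) - (1/\<rho>) *\<^sub>R \<xi>"
    by (simp add: u_def algebra_simps)
  have "(norm ((u - z) - (1/\<rho>) *\<^sub>R \<xi>))\<^sup>2
      = (norm (u - z))\<^sup>2 - 2 / \<rho> * inner (u - z) \<xi> + (norm \<xi>)\<^sup>2 / \<rho>\<^sup>2"
    unfolding power2_norm_eq_inner
    by (simp add: inner_diff_left inner_diff_right algebra_simps power2_eq_square inner_commute)
  then show ?thesis
    unfolding G_obj_def u u_def[symmetric] using assms
    by (simp add: field_simps inner_diff_left inner_add_left inner_add_right inner_diff_right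
        power2_eq_square inner_commute)
qed

lemma z_update_cong_sum:
  assumes "\<rho> \<noteq> 0" and "g + \<xi> = g' + \<xi>'"
  shows "z_update W g w lam zt \<rho> \<eta> \<xi> = z_update W g' w lam zt \<rho> \<eta> \<xi>'"
  unfolding z_update_def G_obj_decompose[OF assms(1)] assms(2) by simp

lemma enn2real_le_mult_if_mutually_bounded:
  assumes "x \<le> ennreal c * y" and "y \<le> ennreal c * x" and "c \<ge> 0"
  shows "enn2real x \<le> c * enn2real y"
proof (cases "y = top")
  case True
  with assms(2) have "x = top"
    by (metis ennreal_mult_eq_top_iff ennreal_neq_top top.extremum_uniqueI)
  with True show ?thesis by simp
next
  case False
  then have "enn2real x \<le> enn2real (ennreal c * y)"
    using assms(1) by (intro enn2real_mono) (auto simp: ennreal_mult_less_top top.not_eq_extremum)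
  with assms(3) show ?thesis by (simp add: enn2real_mult)
qed

lemma emeasure_density_translate_le:
  fixes f :: "'a::euclidean_space \<Rightarrow> ennreal"
  assumes f: "f \<in> borel_measurable borel" and bound: "\<And>y. f (y - d) \<le> c * f y"
  shows "emeasure (density lborel f) ((\<lambda>x. x + d) -` A) \<le> c * emeasure (density lborel f) A"
proof (cases "A \<in> sets borel")
  case False
  have "(\<lambda>x. x + d) -` A \<notin> sets borel"
  proof
    assume "(\<lambda>x. x + d) -` A \<in> sets borel"
    then have "(\<lambda>x. x - d) -` ((\<lambda>x. x + d) -` A) \<inter> space borel \<in> sets borel"
      by (intro measurable_sets[where A = borel]) auto
    moreover have "(\<lambda>x. x - d) -` ((\<lambda>x. x + d) -` A) = A" by auto
    ultimately show False using False by simp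
  qed
  then show ?thesis by (simp add: emeasure_notin_sets)
next
  case A: True
  then have "(\<lambda>x. x + d) -` A \<inter> space borel \<in> sets borel"
    by (intro measurable_sets[where A = borel]) auto
  then have "emeasure (density lborel f) ((\<lambda>x. x + d) -` A)
      = (\<integral>\<^sup>+ x. f ((d + x) - d) * indicator A (d + x) \<partial>lborel)"
    using f by (subst emeasure_density) (auto intro!: nn_integral_cong simp: indicator_def add.commute)
  also have "\<dots> = (\<integral>\<^sup>+ y. f (y - d) * indicator A y \<partial>distr lborel borel ((+) d))"
    using f A by (subst nn_integral_distr) auto
  also have "\<dots> = (\<integral>\<^sup>+ y. f (y - d) * indicator A y \<partial>lborel)"
    by (simp add: lborel_distr_plus)
  also have "\<dots> \<le> (\<integral>\<^sup>+ y. c * (f y * indicator A y) \<partial>lborel)"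
    using bound by (intro nn_integral_mono) (simp add: indicator_def)
  also have "\<dots> = c * emeasure (density lborel f) A"
    using f A by (simp add: nn_integral_cmult emeasure_density)
  finally show ?thesis .
qed

lemma laplace_kernel_translate_le:
  fixes d y :: "real^'k^'j"
  assumes "\<Delta> > 0" and "l1norm d \<le> \<Delta>" and "\<epsilon> \<ge> 0"
  shows "exp (- \<epsilon> * l1norm (y - d) / \<Delta>) \<le> exp \<epsilon> * exp (- \<epsilon> * l1norm y / \<Delta>)"
proof -
  have "l1norm y \<le> l1norm (y - d) + \<Delta>"
    using l1norm_triangle[of "y - d" d] assms(2) by simp
  then have "\<epsilon> * l1norm y \<le> \<epsilon> * l1norm (y - d) + \<epsilon> * \<Delta>"
    using assms(3) by (metis distrib_left mult_left_mono)
  then have "- \<epsilon> * l1norm (y - d) / \<Delta> \<le> \<epsilon> + - \<epsilon> * l1norm y / \<Delta>"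
    using assms(1) by (simp add: field_simps)
  then show ?thesis by (simp add: exp_add[symmetric])
qed

lemma space_laplace_noise [simp]: "space (laplace_noise \<epsilon> \<Delta>) = UNIV"
  unfolding laplace_noise_def by simp

lemma emeasure_laplace_noise_translate_le:
  fixes d :: "real^'k^'j"
  assumes "l1norm d \<le> \<Delta>" and "\<epsilon> \<ge> 0"
  shows "emeasure (laplace_noise \<epsilon> \<Delta>) ((\<lambda>\<xi>. \<xi> + d) -` A)
    \<le> ennreal (exp \<epsilon>) * emeasure (laplace_noise \<epsilon> \<Delta> :: (real^'k^'j) measure) A"
proof (cases "\<Delta> > 0")
  case False
  then have "d = 0" using assms(1) l1norm_le_0_imp_eq_0 by force
  moreover have "1 \<le> ennreal (exp \<epsilon>)"
    using assms(2) ennreal_leI[of 1 "exp \<epsilon>"] by simp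
  ultimately show ?thesis
    using mult_right_mono[of 1 "ennreal (exp \<epsilon>)" "emeasure (laplace_noise \<epsilon> \<Delta>) A"] by simp
next
  case True
  define c :: real where "c = (\<epsilon> / (2 * \<Delta>)) ^ (CARD('j) * CARD('k))"
  have "c \<ge> 0" using True assms(2) by (simp add: c_def)
  have "(laplace_noise \<epsilon> \<Delta> :: (real^'k^'j) measure)
      = density lborel (\<lambda>\<xi>. ennreal (c * exp (- \<epsilon> * l1norm \<xi> / \<Delta>)))"
    using True by (simp add: laplace_noise_def c_def)
  moreover have "ennreal (c * exp (- \<epsilon> * l1norm (y - d) / \<Delta>))
      \<le> ennreal (exp \<epsilon>) * ennreal (c * exp (- \<epsilon> * l1norm y / \<Delta>))" for y
    using laplace_kernel_translate_le[OF True assms, of y] \<open>c \<ge> 0\<close>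
    by (simp add: ennreal_mult'[symmetric] mult_left_mono mult.left_commute)
  ultimately show ?thesis
    by (simp only:) (rule emeasure_density_translate_le; use borel_measurable_l1norm in measurable)
qed

lemma measure_laplace_noise_translate_le:
  fixes d :: "real^'k^'j"
  assumes "l1norm d \<le> \<Delta>" and "\<epsilon> \<ge> 0"
  shows "measure (laplace_noise \<epsilon> \<Delta>) ((\<lambda>\<xi>. \<xi> + d) -` A)
    \<le> exp \<epsilon> * measure (laplace_noise \<epsilon> \<Delta> :: (real^'k^'j) measure) A"
proof -
  txt \<open>enn2real sends \<infinity> to 0, so the reverse bound is needed to rule out an infinite
    measure of A next to a finite measure of its translate.\<close>
  have "(\<lambda>\<xi>. \<xi> + - d) -` ((\<lambda>\<xi>. \<xi> + d) -` A) = A" by auto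
  then have "emeasure (laplace_noise \<epsilon> \<Delta>) A
      \<le> ennreal (exp \<epsilon>) * emeasure (laplace_noise \<epsilon> \<Delta>) ((\<lambda>\<xi>. \<xi> + d) -` A)"
    using emeasure_laplace_noise_translate_le[of "- d" \<Delta> \<epsilon> "(\<lambda>\<xi>. \<xi> + d) -` A"] assms by simp
  then show ?thesis
    unfolding measure_def
    by (intro enn2real_le_mult_if_mutually_bounded emeasure_laplace_noise_translate_le assms)
      (simp_all add: less_imp_le)
qed

theorem theorem1:
  fixes P I M :: nat and \<beta> \<rho> \<eta> \<epsilon> :: real
    and \<phi> :: "real^'k^'j \<Rightarrow> real^'j \<Rightarrow> real^'k \<Rightarrow> real"
    and r :: "real^'k^'j \<Rightarrow> real"
    and fp' :: "real^'k^'j \<Rightarrow> ((real^'j) \<times> (real^'k)) list \<Rightarrow> real^'k^'j"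
    and h :: "nat \<Rightarrow> real^'k^'j \<Rightarrow> real"
    and W :: "(real^'k^'j) set"
    and w lam zt :: "real^'k^'j"
    and Dp Dp' :: "((real^'j) \<times> (real^'k)) list"
    and S :: "(real^'k^'j) set"
  assumes "P > 0" and "I > 0" and "length Dp \<le> I" and "\<beta> > 0"
    and "\<And>x y. convex_on UNIV (\<lambda>z. \<phi> z x y)"
    and "convex_on UNIV r"
    and "\<And>D z. is_subgradient (fp P I \<beta> \<phi> r D) z (fp' z D)"
    and "W = {z. \<forall>m<M. h m z \<le> 0}"
    and "\<And>m. m < M \<Longrightarrow> convex_on UNIV (h m) \<and> C2_fun (h m)"
    and "compact W" and "convex W" and "W \<noteq> {}"
    and "\<rho> > 0" and "\<eta> > 0" and "\<epsilon> > 0"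
    and "bdd_above ((\<lambda>D'. l1norm (fp' zt Dp - fp' zt D')) ` neighbours Dp)"
    and "Dp' \<in> neighbours Dp"
    and "S \<in> sets borel"
  shows "let \<Delta> = sensitivity (fp' zt) Dp;
             N = (laplace_noise \<epsilon> \<Delta> :: (real^'k^'j) measure);
             pr = (\<lambda>D. measure N {\<xi> \<in> space N. z_update W (fp' zt D) w lam zt \<rho> \<eta> \<xi> \<in> S})
         in exp (- \<epsilon>) * pr Dp' \<le> pr Dp \<and> pr Dp \<le> exp \<epsilon> * pr Dp'"
proof -
  define \<Delta> where "\<Delta> = sensitivity (fp' zt) Dp"
  define N where "N = (laplace_noise \<epsilon> \<Delta> :: (real^'k^'j) measure)"
  define d where "d = fp' zt Dp - fp' zt Dp'"
  define B where "B = z_update W (fp' zt Dp') w lam zt \<rho> \<eta> -` S"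
  have d_le: "l1norm d \<le> \<Delta>"
    unfolding d_def \<Delta>_def sensitivity_def using assms(16,17) by (intro cSup_upper) auto
  have "z_update W (fp' zt Dp) w lam zt \<rho> \<eta> \<xi> = z_update W (fp' zt Dp') w lam zt \<rho> \<eta> (\<xi> + d)"
    for \<xi>
    using assms(13) by (intro z_update_cong_sum) (simp_all add: d_def)
  then have pr_Dp:
      "{\<xi> \<in> space N. z_update W (fp' zt Dp) w lam zt \<rho> \<eta> \<xi> \<in> S} = (\<lambda>\<xi>. \<xi> + d) -` B"
    by (auto simp: N_def B_def)
  have pr_Dp': "{\<xi> \<in> space N. z_update W (fp' zt Dp') w lam zt \<rho> \<eta> \<xi> \<in> S} = B"
    by (auto simp: N_def B_def)
  have upper: "measure N ((\<lambda>\<xi>. \<xi> + d) -` B) \<le> exp \<epsilon> * measure N B"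
    unfolding N_def using d_le assms(15) by (intro measure_laplace_noise_translate_le) simp_all
  have "measure N ((\<lambda>\<xi>. \<xi> + - d) -` ((\<lambda>\<xi>. \<xi> + d) -` B))
      \<le> exp \<epsilon> * measure N ((\<lambda>\<xi>. \<xi> + d) -` B)"
    unfolding N_def using d_le assms(15) by (intro measure_laplace_noise_translate_le) simp_all
  moreover have "(\<lambda>\<xi>. \<xi> + - d) -` ((\<lambda>\<xi>. \<xi> + d) -` B) = B" by auto
  ultimately have lower: "exp (- \<epsilon>) * measure N B \<le> measure N ((\<lambda>\<xi>. \<xi> + d) -` B)"
    by (simp add: exp_minus field_simps)
  show ?thesis
    unfolding Let_def \<Delta>_def[symmetric] N_def[symmetric] pr_Dp pr_Dp' using upper lower by simp
qed

end
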